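(* Let $A$ be a finite skew brace, $k$ a field, and $(V,\beta,\rho)$ an irreducible representation of $A$ over $k$. Then the group representation $(V,\beta)$ of $(A,\cdot)$ is completely reducible (i.e. $V$ is semisimple as a $k(A,\cdot)$-module).
   Context: A skew brace is a set $A$ with two group operations $\cdot$ and $\circ$ such that $a\circ(b\cdot c)=(a\circ b)\cdot a^{-1}\cdot(a\circ c)$ for all $a,b,c\in A$; here $a^{-1}$ is the inverse in $(A,\cdot)$. For $a\in A$ let $\lambda^{\mathrm{op}}_a(b)=(a\circ b)\cdot a^{-1}$. A representation of $A$ over $k$ is a triple $(V,\beta,\rho)$ with $V$ a $k$-vector space, $\beta:(A,\cdot)\to\mathrm{GL}(V)$, $\rho:(A,\circ)\to\mathrm{GL}(V)$ group homomorphisms such that $\beta(\lambda^{\mathrm{op}}_a(b))=\rho(a)\beta(b)\rho(a)^{-1}$ for all $a,b\in A$. It is irreducible if $V\ne 0$ and the only subspaces of $V$ invariant under all $\beta(a)$ and all $\rho(b)$ ($a,b\in A$) are $0$ and $V$. *)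

theory Defs
  imports Main "HOL.Vector_Spaces" "HOL-Algebra.Group"
begin

definition skew_brace :: "('a, 'm) monoid_scheme \<Rightarrow> ('a, 'n) monoid_scheme \<Rightarrow> bool" where
  "skew_brace G H \<longleftrightarrow> group G \<and> group H \<and> carrier G = carrier H \<and>
     (\<forall>a\<in>carrier G. \<forall>b\<in>carrier G. \<forall>c\<in>carrier G.
        a \<otimes>\<^bsub>H\<^esub> (b \<otimes>\<^bsub>G\<^esub> c)
          = (a \<otimes>\<^bsub>H\<^esub> b) \<otimes>\<^bsub>G\<^esub> inv\<^bsub>G\<^esub> a \<otimes>\<^bsub>G\<^esub> (a \<otimes>\<^bsub>H\<^esub> c))"

definition lambda_op :: "('a, 'm) monoid_scheme \<Rightarrow> ('a, 'n) monoid_scheme \<Rightarrow> 'a \<Rightarrow> 'a \<Rightarrow> 'a" where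
  "lambda_op G H a b = (a \<otimes>\<^bsub>H\<^esub> b) \<otimes>\<^bsub>G\<^esub> inv\<^bsub>G\<^esub> a"

text \<open>Group homomorphism from a group into GL(V), V being the whole type 'v with
  scalar multiplication scale.\<close>
definition GL_hom :: "('k::field \<Rightarrow> 'v::ab_group_add \<Rightarrow> 'v) \<Rightarrow> ('a, 'm) monoid_scheme
     \<Rightarrow> ('a \<Rightarrow> 'v \<Rightarrow> 'v) \<Rightarrow> bool" where
  "GL_hom scale G f \<longleftrightarrow>
     (\<forall>a\<in>carrier G. Vector_Spaces.linear scale scale (f a) \<and> bij (f a)) \<and>
     (\<forall>a\<in>carrier G. \<forall>b\<in>carrier G. f (a \<otimes>\<^bsub>G\<^esub> b) = f a \<circ> f b)"

definition skew_brace_rep :: "('a, 'm) monoid_scheme \<Rightarrow> ('a, 'n) monoid_scheme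
     \<Rightarrow> ('k::field \<Rightarrow> 'v::ab_group_add \<Rightarrow> 'v) \<Rightarrow> ('a \<Rightarrow> 'v \<Rightarrow> 'v) \<Rightarrow> ('a \<Rightarrow> 'v \<Rightarrow> 'v) \<Rightarrow> bool" where
  "skew_brace_rep G H scale \<beta> \<rho> \<longleftrightarrow>
     vector_space scale \<and> GL_hom scale G \<beta> \<and> GL_hom scale H \<rho> \<and>
     (\<forall>a\<in>carrier G. \<forall>b\<in>carrier G.
        \<beta> (lambda_op G H a b) = \<rho> a \<circ> \<beta> b \<circ> inv_into UNIV (\<rho> a))"

definition irreducible_rep :: "('a, 'm) monoid_scheme \<Rightarrow> ('a, 'n) monoid_scheme
     \<Rightarrow> ('k::field \<Rightarrow> 'v::ab_group_add \<Rightarrow> 'v) \<Rightarrow> ('a \<Rightarrow> 'v \<Rightarrow> 'v) \<Rightarrow> ('a \<Rightarrow> 'v \<Rightarrow> 'v) \<Rightarrow> bool" where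
  "irreducible_rep G H scale \<beta> \<rho> \<longleftrightarrow>
     skew_brace_rep G H scale \<beta> \<rho> \<and> (UNIV :: 'v set) \<noteq> {0} \<and>
     (\<forall>W. module.subspace scale W \<and> (\<forall>a\<in>carrier G. \<beta> a ` W \<subseteq> W) \<and>
          (\<forall>a\<in>carrier G. \<rho> a ` W \<subseteq> W) \<longrightarrow> W = {0} \<or> W = UNIV)"

definition completely_reducible :: "('a, 'm) monoid_scheme
     \<Rightarrow> ('k::field \<Rightarrow> 'v::ab_group_add \<Rightarrow> 'v) \<Rightarrow> ('a \<Rightarrow> 'v \<Rightarrow> 'v) \<Rightarrow> bool" where
  "completely_reducible G scale f \<longleftrightarrow>
     (\<forall>W. module.subspace scale W \<and> (\<forall>a\<in>carrier G. f a ` W \<subseteq> W) \<longrightarrow>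
        (\<exists>U. module.subspace scale U \<and> (\<forall>a\<in>carrier G. f a ` U \<subseteq> U) \<and>
             W \<inter> U = {0} \<and> {w + u | w u. w \<in> W \<and> u \<in> U} = UNIV))"

end

theory Submission
  imports Defs
begin

text \<open>
  Let \<open>W\<close> be a \<open>\<beta>\<close>-invariant subspace and choose, by Zorn's lemma, a \<open>\<beta>\<close>-invariant subspace \<open>U\<close>
  maximal with \<open>W \<inter> U = 0\<close>. Then \<open>Y = W + U\<close> is essential: it meets every nonzero
  \<open>\<beta>\<close>-invariant subspace. The relation \<open>\<rho>(a) \<beta>(b) \<rho>(a)\<inverse> = \<beta>(\<lambda>\<^sup>o\<^sup>p\<^sub>a(b))\<close>, with \<open>\<lambda>\<^sup>o\<^sup>p\<^sub>a\<close> a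
  permutation of \<open>A\<close>, shows that each \<open>\<rho>(a)\<inverse>(Y)\<close> is again \<open>\<beta>\<close>-invariant and essential, and
  since \<open>A\<close> is finite so is their intersection \<open>Z\<close>. But \<open>Z\<close> is also \<open>\<rho>\<close>-invariant and nonzero,
  so irreducibility forces \<open>Z = V\<close>; as \<open>Z \<subseteq> Y\<close>, \<open>U\<close> is a complement of \<open>W\<close>.
\<close>

definition invariant_under :: "'i set \<Rightarrow> ('i \<Rightarrow> 'v \<Rightarrow> 'v) \<Rightarrow> 'v set \<Rightarrow> bool" where
  "invariant_under S f W \<longleftrightarrow> (\<forall>a\<in>S. f a ` W \<subseteq> W)"

lemma invariant_under_UNIV [simp]: "invariant_under S f UNIV"
  by (simp add: invariant_under_def)

lemma invariant_under_Int:
  "invariant_under S f A \<Longrightarrow> invariant_under S f B \<Longrightarrow> invariant_under S f (A \<inter> B)"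
  unfolding invariant_under_def by blast

lemma invariant_under_vimage:
  assumes "invariant_under S f E"
    and "\<And>b. b \<in> S \<Longrightarrow> T \<circ> f b = f (\<sigma> b) \<circ> T" and "\<sigma> ` S \<subseteq> S"
  shows "invariant_under S f (T -` E)"
  unfolding invariant_under_def
proof (intro ballI subsetI)
  fix b v assume b: "b \<in> S" and "v \<in> f b ` (T -` E)"
  then obtain x where x: "T x \<in> E" "v = f b x" by auto
  have "T v = f (\<sigma> b) (T x)"
    using x(2) fun_cong[OF assms(2)[OF b]] by simp
  also have "\<dots> \<in> E"
    using assms(1,3) b x(1) by (auto simp: invariant_under_def)
  finally show "v \<in> T -` E" by simp
qed

lemma GL_hom_one:
  assumes "group G" and "GL_hom scale G f"
  shows "f \<one>\<^bsub>G\<^esub> = id"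
proof -
  have one: "\<one>\<^bsub>G\<^esub> \<in> carrier G"
    using assms(1) by (simp add: group.is_monoid monoid.one_closed)
  then have "f \<one>\<^bsub>G\<^esub> \<circ> f \<one>\<^bsub>G\<^esub> = f \<one>\<^bsub>G\<^esub> \<circ> id"
    using assms by (metis GL_hom_def comp_id group.is_monoid monoid.l_one)
  moreover have "inj (f \<one>\<^bsub>G\<^esub>)"
    using assms(2) one by (simp add: GL_hom_def bij_is_inj)
  ultimately show ?thesis
    by (metis fun.inj_map_strong inj_eq)
qed

lemma GL_hom_INT_vimage_subset:
  assumes "group G" and "GL_hom scale G f"
  shows "(\<Inter>a\<in>carrier G. f a -` Y) \<subseteq> Y"
proof -
  have "\<one>\<^bsub>G\<^esub> \<in> carrier G" using assms(1) by (simp add: group.is_monoid monoid.one_closed)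
  then show ?thesis using GL_hom_one[OF assms] by force
qed

lemma GL_hom_invariant_under_INT_vimage:
  assumes "group G" and "GL_hom scale G f"
  shows "invariant_under (carrier G) f (\<Inter>a\<in>carrier G. f a -` Y)"
  unfolding invariant_under_def
proof (intro ballI subsetI)
  fix c v assume c: "c \<in> carrier G" and "v \<in> f c ` (\<Inter>a\<in>carrier G. f a -` Y)"
  then obtain z where z: "\<forall>a\<in>carrier G. f a z \<in> Y" and v: "v = f c z" by auto
  have "f a v \<in> Y" if a: "a \<in> carrier G" for a
  proof -
    have "a \<otimes>\<^bsub>G\<^esub> c \<in> carrier G"
      using assms(1) a c by (simp add: group.is_monoid monoid.m_closed)
    moreover have "f (a \<otimes>\<^bsub>G\<^esub> c) = f a \<circ> f c"
      using assms(2) a c by (simp add: GL_hom_def)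
    ultimately show ?thesis using z v by (metis comp_apply)
  qed
  then show "v \<in> (\<Inter>a\<in>carrier G. f a -` Y)" by blast
qed

context vector_space
begin

interpretation endo: vector_space_pair scale scale ..

definition essential :: "'i set \<Rightarrow> ('i \<Rightarrow> 'b \<Rightarrow> 'b) \<Rightarrow> 'b set \<Rightarrow> bool" where
  "essential S f E \<longleftrightarrow>
     (\<forall>X. subspace X \<and> invariant_under S f X \<and> X \<noteq> {0} \<longrightarrow> (\<exists>x\<in>X \<inter> E. x \<noteq> 0))"

lemma invariant_under_sums:
  assumes "\<And>a. a \<in> S \<Longrightarrow> Vector_Spaces.linear scale scale (f a)"
    and "invariant_under S f A" and "invariant_under S f B"
  shows "invariant_under S f {x + y | x y. x \<in> A \<and> y \<in> B}"
  unfolding invariant_under_def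
proof (intro ballI subsetI)
  fix a v assume a: "a \<in> S" and "v \<in> f a ` {x + y | x y. x \<in> A \<and> y \<in> B}"
  then obtain x y where xy: "x \<in> A" "y \<in> B" "v = f a x + f a y"
    using endo.linear_add[OF assms(1)[OF a]] by auto
  then have "f a x \<in> A" "f a y \<in> B"
    using a assms(2,3) unfolding invariant_under_def by blast+
  then show "v \<in> {x + y | x y. x \<in> A \<and> y \<in> B}" using xy(3) by blast
qed

lemma exists_maximal_disjoint_invariant_subspace:
  assumes "subspace W" and "\<And>a. a \<in> S \<Longrightarrow> Vector_Spaces.linear scale scale (f a)"
  obtains U where "subspace U" "invariant_under S f U" "W \<inter> U = {0}"
    and "\<And>X. subspace X \<Longrightarrow> invariant_under S f X \<Longrightarrow> W \<inter> X = {0} \<Longrightarrow> U \<subseteq> X \<Longrightarrow> X = U"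
proof -
  define \<A> where "\<A> = {U. subspace U \<and> invariant_under S f U \<and> W \<inter> U = {0}}"
  have "\<exists>U\<in>\<A>. \<forall>X\<in>\<A>. U \<subseteq> X \<longrightarrow> X = U"
  proof (rule Zorn_Lemma2, intro ballI)
    fix C assume C: "C \<in> chains \<A>"
    show "\<exists>U\<in>\<A>. \<forall>X\<in>C. X \<subseteq> U"
    proof (cases "C = {}")
      case True
      have "{0} \<in> \<A>"
        using assms by (auto simp: \<A>_def invariant_under_def subspace_0 endo.linear_0)
      then show ?thesis using True by blast
    next
      case False
      have CA: "C \<subseteq> \<A>" using C by (rule chainsD2)
      have "subspace (\<Union>C)"
      proof (rule subspaceI)
        show "0 \<in> \<Union>C" using False CA by (auto simp: \<A>_def subspace_0)
        show "x + y \<in> \<Union>C" if xy: "x \<in> \<Union>C" "y \<in> \<Union>C" for x y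
        proof -
          obtain X Y where "X \<in> C" "Y \<in> C" "x \<in> X" "y \<in> Y" using xy by blast
          moreover have "subspace X" "subspace Y" using \<open>X \<in> C\<close> \<open>Y \<in> C\<close> CA by (auto simp: \<A>_def)
          ultimately show ?thesis
            using chainsD[OF C \<open>X \<in> C\<close> \<open>Y \<in> C\<close>] by (meson UnionI subsetD subspace_add)
        qed
        show "c *s x \<in> \<Union>C" if "x \<in> \<Union>C" for c x
          using that CA by (auto simp: \<A>_def intro: subspace_scale)
      qed
      moreover have "invariant_under S f (\<Union>C)"
        using CA unfolding \<A>_def invariant_under_def by blast
      moreover have "W \<inter> \<Union>C = {0}"
        using CA False assms(1) by (auto simp: \<A>_def subspace_0)
      ultimately have "\<Union>C \<in> \<A>" by (simp add: \<A>_def)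
      then show ?thesis by blast
    qed
  qed
  then show thesis using that by (auto simp: \<A>_def)
qed

lemma essential_sum_maximal_disjoint:
  assumes lin: "\<And>a. a \<in> S \<Longrightarrow> Vector_Spaces.linear scale scale (f a)"
    and W: "subspace W" "invariant_under S f W"
    and U: "subspace U" "invariant_under S f U" "W \<inter> U = {0}"
    and U_max: "\<And>X. subspace X \<Longrightarrow> invariant_under S f X \<Longrightarrow> W \<inter> X = {0} \<Longrightarrow> U \<subseteq> X \<Longrightarrow> X = U"
  shows "essential S f {w + u | w u. w \<in> W \<and> u \<in> U}" (is "essential S f ?Y")
  unfolding essential_def
proof (intro allI impI)
  fix X assume X: "subspace X \<and> invariant_under S f X \<and> X \<noteq> {0}"
  show "\<exists>x\<in>X \<inter> ?Y. x \<noteq> 0"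
  proof (rule ccontr)
    assume "\<not> ?thesis"
    then have XY: "\<And>x. x \<in> X \<Longrightarrow> x \<in> ?Y \<Longrightarrow> x = 0" by blast
    \<comment> \<open>\<open>U + X\<close> still meets \<open>W\<close> trivially, so maximality of \<open>U\<close> gives \<open>X \<subseteq> U\<close>.\<close>
    define U' where "U' = {u + x | u x. u \<in> U \<and> x \<in> X}"
    have "W \<inter> U' \<subseteq> {0}"
    proof
      fix v assume v: "v \<in> W \<inter> U'"
      then obtain u x where ux: "u \<in> U" "x \<in> X" "v = u + x" by (auto simp: U'_def)
      have "x = v + (- u)" using ux by simp
      moreover have "v + (- u) \<in> ?Y" using v ux U(1) subspace_neg by blast
      ultimately have "x = 0" using XY ux by auto
      then show "v \<in> {0}" using v ux U(3) by auto
    qed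
    moreover have "U \<subseteq> U'" unfolding U'_def using X subspace_0 by force
    ultimately have "U' = U"
      using U_max U W X subspace_0 unfolding U'_def
      by (intro U_max subspace_sums invariant_under_sums lin) auto
    then have "X \<subseteq> ?Y" unfolding U'_def using U(1) W(1) subspace_0 by force
    moreover obtain x0 where "x0 \<in> X" "x0 \<noteq> 0" using X subspace_0 by blast
    ultimately show False using XY by blast
  qed
qed

lemma exists_disjoint_invariant_subspace_essential_sum:
  assumes "\<And>a. a \<in> S \<Longrightarrow> Vector_Spaces.linear scale scale (f a)"
    and "subspace W" "invariant_under S f W"
  obtains U where "subspace U" "invariant_under S f U" "W \<inter> U = {0}"
    and "essential S f {w + u | w u. w \<in> W \<and> u \<in> U}"
proof (rule exists_maximal_disjoint_invariant_subspace[OF assms(2,1)])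
  fix U assume U: "subspace U" "invariant_under S f U" "W \<inter> U = {0}"
    and U_max: "\<And>X. subspace X \<Longrightarrow> invariant_under S f X \<Longrightarrow> W \<inter> X = {0} \<Longrightarrow> U \<subseteq> X \<Longrightarrow> X = U"
  show thesis
    using that[OF U essential_sum_maximal_disjoint[OF assms U U_max]] .
qed

lemma essential_Int:
  assumes "subspace E" "invariant_under S f E" "essential S f E" and "essential S f E'"
  shows "essential S f (E \<inter> E')"
  unfolding essential_def
proof (intro allI impI)
  fix X assume X: "subspace X \<and> invariant_under S f X \<and> X \<noteq> {0}"
  then obtain x where "x \<in> X \<inter> E" "x \<noteq> 0"
    using assms(3) unfolding essential_def by blast
  then have "subspace (X \<inter> E) \<and> invariant_under S f (X \<inter> E) \<and> X \<inter> E \<noteq> {0}"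
    using X assms(1,2) by (auto intro: subspace_inter invariant_under_Int)
  then show "\<exists>x\<in>X \<inter> (E \<inter> E'). x \<noteq> 0"
    using assms(4) unfolding essential_def by blast
qed

lemma essential_INT:
  assumes "finite I"
    and "\<And>i. i \<in> I \<Longrightarrow> subspace (E i) \<and> invariant_under S f (E i) \<and> essential S f (E i)"
  shows "subspace (\<Inter>i\<in>I. E i) \<and> invariant_under S f (\<Inter>i\<in>I. E i) \<and> essential S f (\<Inter>i\<in>I. E i)"
  using assms
proof (induction I rule: finite_induct)
  case empty
  then show ?case by (auto simp: essential_def subspace_0)
next
  case (insert i I)
  then show ?case
    by (auto intro: subspace_inter invariant_under_Int essential_Int)
qed

lemma essential_vimage:
  assumes T: "Vector_Spaces.linear scale scale T" "inj T"
    and intertwine: "\<And>b. b \<in> S \<Longrightarrow> T \<circ> f b = f (\<sigma> b) \<circ> T" and "S \<subseteq> \<sigma> ` S"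
    and "essential S f E"
  shows "essential S f (T -` E)"
  unfolding essential_def
proof (intro allI impI)
  fix X assume X: "subspace X \<and> invariant_under S f X \<and> X \<noteq> {0}"
  have "invariant_under S f (T ` X)"
    unfolding invariant_under_def
  proof (intro ballI subsetI)
    fix c v assume "c \<in> S" and "v \<in> f c ` T ` X"
    then obtain b x where b: "b \<in> S" "c = \<sigma> b" and x: "x \<in> X" "v = f (\<sigma> b) (T x)"
      using assms(4) by blast
    then have "v = T (f b x)" using fun_cong[OF intertwine[OF b(1)]] by simp
    moreover have "f b x \<in> X" using X b(1) x(1) by (auto simp: invariant_under_def)
    ultimately show "v \<in> T ` X" by blast
  qed
  moreover have "T ` X \<noteq> {0}"
    using X T subspace_0 by (metis endo.linear_0 image_empty image_insert inj_image_eq_iff)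
  ultimately obtain x where "x \<in> X" "T x \<in> E" "T x \<noteq> 0"
    using X assms(5) endo.linear_subspace_image[OF T(1)] unfolding essential_def by blast
  moreover have "x \<noteq> 0" using \<open>T x \<noteq> 0\<close> endo.linear_0[OF T(1)] by auto
  ultimately show "\<exists>x\<in>X \<inter> T -` E. x \<noteq> 0" by blast
qed

end

lemma lambda_op_image:
  assumes G: "group G" and H: "group H" "carrier H = carrier G" and a: "a \<in> carrier G"
  shows "lambda_op G H a ` carrier G = carrier G"
proof
  show "lambda_op G H a ` carrier G \<subseteq> carrier G"
    using assms unfolding lambda_op_def
    by (auto intro!: group.inv_closed monoid.m_closed group.is_monoid)
  show "carrier G \<subseteq> lambda_op G H a ` carrier G"
  proof
    fix c assume c: "c \<in> carrier G"
    define b where "b = inv\<^bsub>H\<^esub> a \<otimes>\<^bsub>H\<^esub> (c \<otimes>\<^bsub>G\<^esub> a)"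
    have ca: "c \<otimes>\<^bsub>G\<^esub> a \<in> carrier G"
      using G a c by (simp add: group.is_monoid monoid.m_closed)
    have b_in: "b \<in> carrier G"
      unfolding b_def using H a ca by (metis group.inv_closed group.is_monoid monoid.m_closed)
    have "a \<otimes>\<^bsub>H\<^esub> b = c \<otimes>\<^bsub>G\<^esub> a"
      unfolding b_def using H a ca
      by (metis group.inv_closed group.is_monoid group.r_inv monoid.l_one monoid.m_assoc)
    then have "lambda_op G H a b = c"
      unfolding lambda_op_def using G a c by (simp add: group.is_monoid monoid.m_assoc group.r_inv)
    with b_in show "c \<in> lambda_op G H a ` carrier G" by blast
  qed
qed

lemma skew_brace_rep_intertwining:
  assumes "skew_brace_rep G H scale \<beta> \<rho>" and "carrier H = carrier G"
    and "a \<in> carrier G" "b \<in> carrier G"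
  shows "\<rho> a \<circ> \<beta> b = \<beta> (lambda_op G H a b) \<circ> \<rho> a"
proof -
  have "bij (\<rho> a)" using assms by (auto simp: skew_brace_rep_def GL_hom_def)
  moreover have "\<beta> (lambda_op G H a b) = \<rho> a \<circ> \<beta> b \<circ> inv_into UNIV (\<rho> a)"
    using assms by (simp add: skew_brace_rep_def)
  ultimately show ?thesis by (auto simp: bij_def)
qed

lemma skew_brace_rep_vimage:
  assumes rep: "skew_brace_rep G H scale \<beta> \<rho>"
    and G: "group G" and H: "group H" "carrier H = carrier G" and a: "a \<in> carrier G"
    and Y: "module.subspace scale Y" "invariant_under (carrier G) \<beta> Y"
      "vector_space.essential scale (carrier G) \<beta> Y"
  shows "module.subspace scale (\<rho> a -` Y) \<and> invariant_under (carrier G) \<beta> (\<rho> a -` Y)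
    \<and> vector_space.essential scale (carrier G) \<beta> (\<rho> a -` Y)"
proof -
  interpret vector_space scale using rep by (simp add: skew_brace_rep_def)
  interpret endo: vector_space_pair scale scale ..
  have "Vector_Spaces.linear scale scale (\<rho> a)" "inj (\<rho> a)"
    using rep H(2) a by (auto simp: skew_brace_rep_def GL_hom_def bij_is_inj)
  then show ?thesis
    using Y lambda_op_image[OF G H a] skew_brace_rep_intertwining[OF rep H(2) a]
    by (auto intro!: endo.linear_subspace_vimage invariant_under_vimage essential_vimage)
qed

theorem proposition3p3:
  fixes G :: "('a, 'm) monoid_scheme" and H :: "('a, 'n) monoid_scheme"
    and scale :: "'k::field \<Rightarrow> 'v::ab_group_add \<Rightarrow> 'v"
    and \<beta> \<rho> :: "'a \<Rightarrow> 'v \<Rightarrow> 'v"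
  assumes "skew_brace G H"
    and "finite (carrier G)"
    and "irreducible_rep G H scale \<beta> \<rho>"
  shows "completely_reducible G scale \<beta>"
proof -
  have G: "group G" and H: "group H" "carrier H = carrier G"
    using assms(1) by (auto simp: skew_brace_def)
  have rep: "skew_brace_rep G H scale \<beta> \<rho>" and nonzero: "(UNIV :: 'v set) \<noteq> {0}"
    and irreducible: "\<And>W. module.subspace scale W \<Longrightarrow> invariant_under (carrier G) \<beta> W \<Longrightarrow>
          invariant_under (carrier G) \<rho> W \<Longrightarrow> W = {0} \<or> W = UNIV"
    using assms(3) by (auto simp: irreducible_rep_def invariant_under_def)
  interpret vector_space scale using rep by (simp add: skew_brace_rep_def)
  have GL_\<rho>: "GL_hom scale H \<rho>" using rep by (simp add: skew_brace_rep_def)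
  have lin_\<beta>: "Vector_Spaces.linear scale scale (\<beta> a)" if "a \<in> carrier G" for a
    using that rep by (simp add: skew_brace_rep_def GL_hom_def)
  show ?thesis unfolding completely_reducible_def
  proof (intro allI impI)
    fix W assume "subspace W \<and> (\<forall>a\<in>carrier G. \<beta> a ` W \<subseteq> W)"
    then have W: "subspace W" "invariant_under (carrier G) \<beta> W" by (auto simp: invariant_under_def)
    then obtain U where U: "subspace U" "invariant_under (carrier G) \<beta> U" "W \<inter> U = {0}"
      and Y_essential: "essential (carrier G) \<beta> {w + u | w u. w \<in> W \<and> u \<in> U}"
      using exists_disjoint_invariant_subspace_essential_sum[OF lin_\<beta> W] by blast
    define Y where "Y = {w + u | w u. w \<in> W \<and> u \<in> U}"
    have Y: "subspace Y" "invariant_under (carrier G) \<beta> Y" "essential (carrier G) \<beta> Y"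
      unfolding Y_def using W U lin_\<beta> Y_essential by (auto intro: subspace_sums invariant_under_sums)
    define Z where "Z = (\<Inter>a\<in>carrier G. \<rho> a -` Y)"
    have Z: "subspace Z" "invariant_under (carrier G) \<beta> Z" "essential (carrier G) \<beta> Z"
      unfolding Z_def using essential_INT[OF assms(2) skew_brace_rep_vimage[OF rep G H _ Y]] by auto
    moreover have "invariant_under (carrier G) \<rho> Z" "Z \<subseteq> Y"
      using GL_hom_invariant_under_INT_vimage[OF H(1) GL_\<rho>] GL_hom_INT_vimage_subset[OF H(1) GL_\<rho>] H(2)
      unfolding Z_def by simp_all
    moreover have "Z \<noteq> {0}"
      using Z(3) nonzero subspace_UNIV invariant_under_UNIV unfolding essential_def by blast
    ultimately have "Y = UNIV" using irreducible by blast
    with U show "\<exists>U. subspace U \<and> (\<forall>a\<in>carrier G. \<beta> a ` U \<subseteq> U) \<and> W \<inter> U = {0} \<and>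
        {w + u |w u. w \<in> W \<and> u \<in> U} = UNIV"
      unfolding Y_def invariant_under_def by blast
  qed
qed

end
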